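(* Let $E>0$ and let $(H_0,H_A,H_B)$ be one of the two choices (a) transverse field: $H_0=E(\sigma_x\otimes I_2+\sigma_y\otimes I_2+I_2\otimes\sigma_x+I_2\otimes\sigma_y)$, $H_A=H_B=E(\sigma_x+\sigma_y)$; (b) longitudinal field: $H_0=E(\sigma_z\otimes I_2+I_2\otimes\sigma_z)$, $H_A=H_B=E\sigma_z$. Let $H_{\mathrm{int}}$ be any Hermitian operator on $\mathbb{C}^2\otimes\mathbb{C}^2$ and $H=H_0+H_{\mathrm{int}}$. Let $\rho$ be a two-qubit density matrix with reduced states $\rho_A=\mathrm{Tr}_B\rho$, $\rho_B=\mathrm{Tr}_A\rho$. If $\mathcal{C}(\rho;H)\ge \mathcal{C}(\rho;H_0)$, then $$\mathcal{C}(\rho_A;H_A)+\mathcal{C}(\rho_B;H_B)\le \mathcal{C}(\rho;H).$$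
   Context: Quantum battery capacity: for a Hermitian $H$ on $\mathbb{C}^d$ with eigenvalues $\epsilon_0\le\epsilon_1\le\dots\le\epsilon_{d-1}$ and a density matrix $\rho$ on $\mathbb{C}^d$ with eigenvalues $\lambda_0\le\lambda_1\le\dots\le\lambda_{d-1}$, $\mathcal{C}(\rho;H)=\sum_{i=0}^{d-1}\epsilon_i(\lambda_i-\lambda_{d-1-i})$. $\sigma_x,\sigma_y,\sigma_z$ are the Pauli matrices and $I_2$ the $2\times 2$ identity. *)

theory Defs
  imports "Jordan_Normal_Form.Matrix" "Jordan_Normal_Form.Char_Poly"
begin

definition hermitian :: "nat \<Rightarrow> complex mat \<Rightarrow> bool" where
  "hermitian n A \<longleftrightarrow> A \<in> carrier_mat n n \<and>
     (\<forall>i<n. \<forall>j<n. A $$ (i, j) = cnj (A $$ (j, i)))"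

definition psd :: "nat \<Rightarrow> complex mat \<Rightarrow> bool" where
  "psd n A \<longleftrightarrow> hermitian n A \<and>
     (\<forall>v \<in> carrier_vec n. 0 \<le> Re (\<Sum>i<n. cnj (v $ i) * (A *\<^sub>v v) $ i))"

definition density :: "nat \<Rightarrow> complex mat \<Rightarrow> bool" where
  "density n \<rho> \<longleftrightarrow> psd n \<rho> \<and> (\<Sum>i<n. \<rho> $$ (i, i)) = 1"

(* eigenvalues (with multiplicity, roots of the characteristic polynomial),
   real parts (they are real for Hermitian matrices), in nondecreasing order *)
definition eigs :: "complex mat \<Rightarrow> real list" where
  "eigs A = sorted_list_of_multiset (image_mset Re (proots (char_poly A)))"

definition capacity :: "complex mat \<Rightarrow> complex mat \<Rightarrow> real" where
  "capacity \<rho> H = (let d = dim_row H; e = eigs H; l = eigs \<rho> in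
      \<Sum>i<d. e ! i * (l ! i - l ! (d - 1 - i)))"

definition sigma_x :: "complex mat" where
  "sigma_x = mat_of_rows_list 2 [[0, 1], [1, 0]]"
definition sigma_y :: "complex mat" where
  "sigma_y = mat_of_rows_list 2 [[0, -\<i>], [\<i>, 0]]"
definition sigma_z :: "complex mat" where
  "sigma_z = mat_of_rows_list 2 [[1, 0], [0, -1]]"
definition I2 :: "complex mat" where
  "I2 = 1\<^sub>m 2"

(* Kronecker product of two 2x2 matrices, basis |ab> indexed by 2a+b *)
definition tensor2 :: "complex mat \<Rightarrow> complex mat \<Rightarrow> complex mat" where
  "tensor2 A B = mat 4 4 (\<lambda>(i, j). A $$ (i div 2, j div 2) * B $$ (i mod 2, j mod 2))"

definition ptrace_B :: "complex mat \<Rightarrow> complex mat" where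
  "ptrace_B \<rho> = mat 2 2 (\<lambda>(i, j). \<Sum>k<2. \<rho> $$ (2 * i + k, 2 * j + k))"
definition ptrace_A :: "complex mat \<Rightarrow> complex mat" where
  "ptrace_A \<rho> = mat 2 2 (\<lambda>(i, j). \<Sum>k<2. \<rho> $$ (2 * k + i, 2 * k + j))"

end

(*
  Write spread(\<sigma>) for the largest minus the smallest eigenvalue of \<sigma>. A qubit Hamiltonian
  with spectrum {-a, a} gives \<sigma> the capacity 2a spread(\<sigma>), and E (T \<otimes> I + I \<otimes> T) with
  T similar to diag(c, -c) has spectrum {-2Ec, 0, 0, 2Ec}, so it gives \<rho> the capacity
  4Ec spread(\<rho>). Both choices of Hamiltonians are of this form (c = sqrt 2 and c = 1), so by
  C(\<rho>; H) \<ge> C(\<rho>; H0) it suffices to show spread(\<rho>_A) + spread(\<rho>_B) \<le> 2 spread(\<rho>).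

  Let (\<psi>, \<psi>') and (\<phi>, \<phi>') be orthonormal eigenbases of \<rho>_A and \<rho>_B and put
  r(a, b) = \<langle>a \<otimes> b, \<rho> (a \<otimes> b)\<rangle>. Then
    spread(\<rho>_A) = r(\<psi>, \<phi>) + r(\<psi>, \<phi>') - r(\<psi>', \<phi>) - r(\<psi>', \<phi>'),
    spread(\<rho>_B) = r(\<psi>, \<phi>) + r(\<psi>', \<phi>) - r(\<psi>, \<phi>') - r(\<psi>', \<phi>'),
  so their sum is 2 (r(\<psi>, \<phi>) - r(\<psi>', \<phi>')), and the Rayleigh bounds for the unit vectors
  \<psi> \<otimes> \<phi> and \<psi>' \<otimes> \<phi>' bound it by 2 spread(\<rho>). The Rayleigh bounds come from
  maximising the quadratic form over the compact unit sphere: a maximiser is an eigenvector.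
*)
theory Submission
  imports Defs "HOL-Analysis.Function_Topology" "HOL-Analysis.Elementary_Metric_Spaces"
begin

section \<open>Sesquilinear forms of matrices\<close>

text \<open>Vectors of \<open>\<complex>\<^sup>n\<close> are represented by functions \<open>nat \<Rightarrow> complex\<close> of which
  only the first \<open>n\<close> values matter; then the unit sphere is a compact subset of a product space.\<close>

definition mat_app :: "complex mat \<Rightarrow> (nat \<Rightarrow> complex) \<Rightarrow> nat \<Rightarrow> complex" where
  "mat_app A x i = (\<Sum>j<dim_row A. A $$ (i, j) * x j)"

definition sesq :: "complex mat \<Rightarrow> (nat \<Rightarrow> complex) \<Rightarrow> (nat \<Rightarrow> complex) \<Rightarrow> complex" where
  "sesq A x y = (\<Sum>i<dim_row A. cnj (x i) * mat_app A y i)"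

definition sqnorm :: "nat \<Rightarrow> (nat \<Rightarrow> complex) \<Rightarrow> real" where
  "sqnorm n x = (\<Sum>i<n. (cmod (x i))\<^sup>2)"

lemma sqnorm_nonneg: "0 \<le> sqnorm n x"
  unfolding sqnorm_def by (simp add: sum_nonneg)

lemma sqnorm_eq_0_iff: "sqnorm n x = 0 \<longleftrightarrow> (\<forall>i<n. x i = 0)"
  unfolding sqnorm_def by (auto simp: sum_nonneg_eq_0_iff)

lemma sqnorm_scale: "sqnorm n (\<lambda>i. c * x i) = (cmod c)\<^sup>2 * sqnorm n x"
  unfolding sqnorm_def by (simp add: sum_distrib_left norm_mult power_mult_distrib)

lemma sqnorm_cong: "(\<And>i. i < n \<Longrightarrow> x i = y i) \<Longrightarrow> sqnorm n x = sqnorm n y"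
  unfolding sqnorm_def by simp

lemma of_real_sqnorm: "of_real (sqnorm n x) = (\<Sum>i<n. cnj (x i) * x i)"
  unfolding sqnorm_def of_real_sum complex_norm_square by (simp add: mult.commute)

lemma sum_lessThan_2: "(\<Sum>i<(2 :: nat). f i) = f 0 + f 1"
  by (simp add: numeral_2_eq_2)

lemma sum_lessThan_4: "(\<Sum>i<(4 :: nat). f i) = f 0 + f 1 + f 2 + f 3"
  by (simp add: numeral_eq_Suc lessThan_Suc add_ac)

lemma sesq_cong:
  "(\<And>i. i < dim_row A \<Longrightarrow> x i = x' i) \<Longrightarrow> (\<And>i. i < dim_row A \<Longrightarrow> y i = y' i) \<Longrightarrow>
   sesq A x y = sesq A x' y'"
  unfolding sesq_def mat_app_def by simp

lemma sesq_scale: "sesq A (\<lambda>i. c * x i) (\<lambda>i. c * x i) = of_real ((cmod c)\<^sup>2) * sesq A x x"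
  unfolding sesq_def mat_app_def sum_distrib_left complex_norm_square
  by (intro sum.cong refl) (simp add: algebra_simps)

lemma sesq_expand:
  fixes t :: real and x w :: "nat \<Rightarrow> complex"
  shows "sesq A (\<lambda>i. x i + t * w i) (\<lambda>i. x i + t * w i)
    = sesq A x x + t * (sesq A x w + sesq A w x) + t\<^sup>2 * sesq A w w"
  unfolding sesq_def mat_app_def sum_distrib_left sum.distrib[symmetric]
  by (intro sum.cong refl) (simp add: algebra_simps power2_eq_square)

lemma sesq_eigenvector:
  assumes "\<And>i. i < dim_row A \<Longrightarrow> mat_app A y i = c * y i"
  shows "sesq A x y = c * (\<Sum>i<dim_row A. cnj (x i) * y i)"
proof -
  have "sesq A x y = (\<Sum>i<dim_row A. cnj (x i) * (c * y i))"
    unfolding sesq_def using assms by (intro sum.cong) simp_all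
  also have "\<dots> = c * (\<Sum>i<dim_row A. cnj (x i) * y i)"
    unfolding sum_distrib_left by (rule sum.cong) simp_all
  finally show ?thesis .
qed

lemma hermitian_carrier: "hermitian n A \<Longrightarrow> A \<in> carrier_mat n n"
  by (simp add: hermitian_def)

text \<open>Oriented so that it is a terminating rewrite rule, also for \<open>i = j\<close>.\<close>

lemma hermitian_cnj: "hermitian n A \<Longrightarrow> i < n \<Longrightarrow> j < n \<Longrightarrow> cnj (A $$ (j, i)) = A $$ (i, j)"
  unfolding hermitian_def by (metis complex_cnj_cnj)

lemma hermitianI:
  "A \<in> carrier_mat n n \<Longrightarrow> (\<And>i j. i < n \<Longrightarrow> j < n \<Longrightarrow> cnj (A $$ (j, i)) = A $$ (i, j)) \<Longrightarrow> hermitian n A"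
  unfolding hermitian_def by (metis complex_cnj_cnj)

lemma hermitian_sesq_swap:
  assumes A: "hermitian n A"
  shows "sesq A y x = cnj (sesq A x y)"
proof -
  have dim: "dim_row A = n"
    using hermitian_carrier[OF A] by simp
  have "sesq A y x = (\<Sum>i<n. \<Sum>j<n. cnj (y i) * A $$ (i, j) * x j)"
    unfolding sesq_def mat_app_def dim by (simp add: sum_distrib_left mult.assoc)
  also have "\<dots> = (\<Sum>j<n. \<Sum>i<n. cnj (y i) * A $$ (i, j) * x j)"
    by (rule sum.swap)
  also have "\<dots> = (\<Sum>j<n. \<Sum>i<n. cnj (cnj (x j) * A $$ (j, i) * y i))"
    using hermitian_cnj[OF A] by (intro sum.cong refl) (simp add: ac_simps)
  also have "\<dots> = cnj (sesq A x y)"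
    unfolding sesq_def mat_app_def dim by (simp add: sum_distrib_left mult.assoc)
  finally show ?thesis .
qed

lemma mat_app_minus_smult_one:
  assumes "A \<in> carrier_mat n n" "i < n"
  shows "mat_app (A - c \<cdot>\<^sub>m 1\<^sub>m n) x i = mat_app A x i - c * x i"
proof -
  have "mat_app (A - c \<cdot>\<^sub>m 1\<^sub>m n) x i = (\<Sum>j<n. A $$ (i, j) * x j - (if j = i then c * x j else 0))"
    using assms unfolding mat_app_def by (intro sum.cong) (auto simp: algebra_simps)
  also have "\<dots> = mat_app A x i - c * x i"
    using assms by (simp add: mat_app_def sum_subtractf)
  finally show ?thesis .
qed

lemma mat_app_uminus: "A \<in> carrier_mat n n \<Longrightarrow> i < n \<Longrightarrow> mat_app (- A) x i = - mat_app A x i"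
  unfolding mat_app_def by (auto simp: sum_negf[symmetric] intro!: sum.cong)

lemma sesq_uminus: "A \<in> carrier_mat n n \<Longrightarrow> sesq (- A) x y = - sesq A x y"
  unfolding sesq_def by (simp add: mat_app_uminus sum_negf[symmetric])

lemma eigenvector_vec_iff:
  assumes "A \<in> carrier_mat n n"
  shows "eigenvector A (vec n x) c \<longleftrightarrow> (\<exists>i<n. x i \<noteq> 0) \<and> (\<forall>i<n. mat_app A x i = c * x i)"
proof -
  have "(A *\<^sub>v vec n x) $ i = mat_app A x i" if "i < n" for i
    using assms that by (simp add: mat_app_def scalar_prod_def atLeast0LessThan)
  then have "A *\<^sub>v vec n x = c \<cdot>\<^sub>v vec n x \<longleftrightarrow> (\<forall>i<n. mat_app A x i = c * x i)"
    using assms by (auto simp: vec_eq_iff simp del: index_mult_mat_vec)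
  moreover have "vec n x \<noteq> 0\<^sub>v n \<longleftrightarrow> (\<exists>i<n. x i \<noteq> 0)"
    by (auto simp: vec_eq_iff)
  ultimately show ?thesis
    using assms by (auto simp: eigenvector_def)
qed

lemma eigenvector_vec_uminus:
  fixes A :: "complex mat"
  assumes A: "A \<in> carrier_mat n n" and ev: "eigenvector (- A) (vec n x) c"
  shows "eigenvector A (vec n x) (- c)"
proof -
  have ev': "\<forall>i<n. mat_app (- A) x i = c * x i" "\<exists>i<n. x i \<noteq> 0"
    using ev unfolding eigenvector_vec_iff[OF uminus_carrier_mat[OF A]] by blast+
  have "mat_app A x i = - c * x i" if "i < n" for i
  proof -
    have "- mat_app A x i = c * x i"
      using ev'(1) A that by (simp add: mat_app_uminus)
    then show ?thesis
      by (subst (asm) minus_equation_iff) simp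
  qed
  then show ?thesis
    using ev'(2) A by (simp add: eigenvector_vec_iff)
qed

lemma quadratic_nonpos_imp_nonpos:
  fixes N c :: real
  assumes quadratic: "\<And>t. 2 * t * N + t\<^sup>2 * c \<le> 0" and c: "c \<le> 0"
  shows "N \<le> 0"
proof (rule ccontr)
  assume "\<not> N \<le> 0"
  then have N: "0 < N"
    by simp
  define t where "t = N / (1 - c)"
  have t: "t * (1 - c) = N"
    unfolding t_def using c by simp
  have "(1 - c)\<^sup>2 * (2 * t * N + t\<^sup>2 * c) = 2 * N * (t * (1 - c)) * (1 - c) + (t * (1 - c))\<^sup>2 * c"
    by (simp add: power2_eq_square algebra_simps)
  also have "\<dots> = N\<^sup>2 * (2 - c)"
    unfolding t by (simp add: power2_eq_square algebra_simps)
  finally have "(1 - c)\<^sup>2 * (2 * t * N + t\<^sup>2 * c) = N\<^sup>2 * (2 - c)" .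
  moreover have "0 < N\<^sup>2 * (2 - c)"
    using N c by simp
  moreover have "(1 - c)\<^sup>2 * (2 * t * N + t\<^sup>2 * c) \<le> 0"
    using quadratic[of t] by (simp add: mult_nonneg_nonpos)
  ultimately show False
    by linarith
qed

text \<open>Moving \<open>x\<close> in the direction \<open>w = B x\<close> changes \<open>\<langle>x, B x\<rangle> = 0\<close> by
  \<open>2 t \<parallel>w\<parallel>\<^sup>2 + t\<^sup>2 \<langle>w, B w\<rangle>\<close>, which must stay nonpositive for all real \<open>t\<close>.\<close>

lemma sesq_nonpos_imp_kernel:
  assumes B: "hermitian n B" and nonpos: "\<And>y. Re (sesq B y y) \<le> 0"
    and zero: "Re (sesq B x x) = 0" and i: "i < n"
  shows "mat_app B x i = 0"
proof -
  define w where "w = mat_app B x"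
  have dim: "dim_row B = n"
    using hermitian_carrier[OF B] by simp
  have wx: "sesq B w x = of_real (sqnorm n w)"
    unfolding of_real_sqnorm sesq_def dim w_def ..
  have xw: "sesq B x w = of_real (sqnorm n w)"
    using hermitian_sesq_swap[OF B, of x w] wx by simp
  have "2 * t * sqnorm n w + t\<^sup>2 * Re (sesq B w w) \<le> 0" for t
    using nonpos[of "\<lambda>i. x i + t * w i"] zero unfolding sesq_expand xw wx by simp
  then have "sqnorm n w \<le> 0"
    using nonpos by (rule quadratic_nonpos_imp_nonpos)
  then have "sqnorm n w = 0"
    using sqnorm_nonneg[of n w] by simp
  then show ?thesis
    using i by (simp add: sqnorm_eq_0_iff w_def)
qed

section \<open>Rayleigh bounds\<close>

lemma continuous_on_coordinate [continuous_intros]: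
  "continuous_on S (\<lambda>x :: nat \<Rightarrow> complex. x i)"
  by (rule continuous_on_subset[OF continuous_on_product_coordinates]) simp

text \<open>\<open>compact_cball\<close> needs the class \<open>heine_borel\<close>, which \<open>complex\<close> only joins in theories
  importing the vector type \<open>'a ^ 'n\<close>, whose \<open>vec\<close> and \<open>$\<close> clash with the matrix library.\<close>

lemma compact_unit_cball_complex: "compact (cball (0 :: complex) 1)"
proof -
  have norm: "cmod (Complex a b) = norm (a, b)" for a b
    by (simp add: norm_Pair cmod_def)
  have "z \<in> (\<lambda>p. Complex (fst p) (snd p)) ` cball 0 1" if "z \<in> cball 0 1" for z
    using that norm[of "Re z" "Im z"] by (intro image_eqI[of _ _ "(Re z, Im z)"]) auto
  then have "cball (0 :: complex) 1 = (\<lambda>p. Complex (fst p) (snd p)) ` cball 0 1"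
    by (auto simp: norm)
  moreover have "continuous_on (cball 0 1) (\<lambda>p :: real \<times> real. Complex (fst p) (snd p))"
    unfolding Complex_eq by (intro continuous_intros)
  ultimately show ?thesis
    by (metis compact_cball compact_continuous_image)
qed

definition unit_sphere :: "nat \<Rightarrow> (nat \<Rightarrow> complex) set" where
  "unit_sphere n = {x. sqnorm n x = 1 \<and> (\<forall>i\<ge>n. x i = 0)}"

lemma compact_unit_sphere: "compact (unit_sphere n)"
proof -
  have "cmod (x i) \<le> 1" if "x \<in> unit_sphere n" for x i
  proof (cases "i < n")
    case True
    then have "(cmod (x i))\<^sup>2 \<le> sqnorm n x"
      unfolding sqnorm_def by (intro member_le_sum) auto
    then show ?thesis
      using that by (simp add: unit_sphere_def power_le_one_iff abs_le_square_iff)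
  qed (use that in \<open>simp add: unit_sphere_def\<close>)
  then have "unit_sphere n = PiE UNIV (\<lambda>_. cball 0 1) \<inter> unit_sphere n"
    by (auto simp: PiE_iff)
  moreover have "compact (PiE (UNIV :: nat set) (\<lambda>_. cball (0 :: complex) 1))"
    using compactin_PiE[of "\<lambda>_. euclidean" "UNIV :: nat set" "\<lambda>_. cball (0 :: complex) 1"]
      compact_unit_cball_complex
    by (simp add: euclidean_product_topology)
  moreover have "unit_sphere n = {x. sqnorm n x = 1} \<inter> (\<Inter>i\<in>{n..}. {x. x i = 0})"
    by (auto simp: unit_sphere_def)
  then have "closed (unit_sphere n)"
    unfolding sqnorm_def by (auto intro!: closed_Int closed_Collect_eq continuous_intros)
  ultimately show ?thesis
    by (metis compact_Int_closed)
qed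

lemma sesq_le_of_unit_sphere:
  assumes A: "A \<in> carrier_mat n n" and bound: "\<And>z. z \<in> unit_sphere n \<Longrightarrow> Re (sesq A z z) \<le> M"
  shows "Re (sesq A y y) \<le> M * sqnorm n y"
proof (cases "sqnorm n y = 0")
  case True
  then have "sesq A y y = sesq A (\<lambda>_. 0) (\<lambda>_. 0)"
    using A by (intro sesq_cong) (auto simp: sqnorm_eq_0_iff)
  then show ?thesis
    using True by (simp add: sesq_def mat_app_def)
next
  case False
  define s where "s = sqrt (sqnorm n y)"
  have s: "0 < s" "s\<^sup>2 = sqnorm n y"
    using False sqnorm_nonneg[of n y] by (auto simp: s_def)
  define z where "z i = (if i < n then of_real (1 / s) * y i else 0)" for i
  have "sesq A z z = of_real ((cmod (of_real (1 / s)))\<^sup>2) * sesq A y y"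
    unfolding sesq_scale[symmetric] using A by (intro sesq_cong) (auto simp: z_def)
  then have sesq_z: "Re (sesq A z z) = Re (sesq A y y) / s\<^sup>2"
    using s by (simp add: power_divide norm_divide)
  have "sqnorm n z = (cmod (of_real (1 / s)))\<^sup>2 * sqnorm n y"
    unfolding sqnorm_scale[symmetric] by (intro sqnorm_cong) (auto simp: z_def)
  then have "z \<in> unit_sphere n"
    using s False by (simp add: unit_sphere_def z_def power_divide norm_divide)
  then have "Re (sesq A y y) / s\<^sup>2 \<le> M"
    using bound[of z] by (simp only: sesq_z)
  then have "Re (sesq A y y) \<le> M * s\<^sup>2"
    using s(1) by (simp add: pos_divide_le_eq)
  then show ?thesis
    using s(2) by simp
qed

lemma sesq_attains_max:
  assumes A: "A \<in> carrier_mat n n" and n: "0 < n"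
  obtains x where "sqnorm n x = 1" "\<And>y. Re (sesq A y y) \<le> Re (sesq A x x) * sqnorm n y"
proof -
  have "sqnorm n (\<lambda>i. if i = 0 then 1 else 0) = (\<Sum>i<n. if i = 0 then 1 else 0)"
    unfolding sqnorm_def by (rule sum.cong) auto
  then have "(\<lambda>i. if i = 0 then 1 else 0) \<in> unit_sphere n"
    using n by (simp add: unit_sphere_def)
  moreover have "continuous_on (unit_sphere n) (\<lambda>x. Re (sesq A x x))"
    unfolding sesq_def mat_app_def by (intro continuous_intros)
  ultimately obtain x where x: "x \<in> unit_sphere n"
    and max: "\<And>z. z \<in> unit_sphere n \<Longrightarrow> Re (sesq A z z) \<le> Re (sesq A x x)"
    using continuous_attains_sup[OF compact_unit_sphere] by blast
  show ?thesis
  proof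
    show "sqnorm n x = 1"
      using x by (simp add: unit_sphere_def)
    show "Re (sesq A y y) \<le> Re (sesq A x x) * sqnorm n y" for y
      using sesq_le_of_unit_sphere[OF A max] .
  qed
qed

lemma hermitian_max_eigenvector:
  assumes A: "hermitian n A" and n: "0 < n"
  obtains x where "sqnorm n x = 1" "eigenvector A (vec n x) (of_real (Re (sesq A x x)))"
    "\<And>y. Re (sesq A y y) \<le> Re (sesq A x x) * sqnorm n y"
proof -
  have Ac: "A \<in> carrier_mat n n"
    using A by (rule hermitian_carrier)
  obtain x where x: "sqnorm n x = 1" and max: "\<And>y. Re (sesq A y y) \<le> Re (sesq A x x) * sqnorm n y"
    using sesq_attains_max[OF Ac n] by blast
  define m where "m = Re (sesq A x x)"
  define B where "B = A - of_real m \<cdot>\<^sub>m 1\<^sub>m n"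
  have B: "hermitian n B"
    using Ac hermitian_cnj[OF A] unfolding B_def by (intro hermitianI) auto
  have sesq_B: "sesq B y y = sesq A y y - of_real (m * sqnorm n y)" for y
    using Ac unfolding sesq_def B_def of_real_mult of_real_sqnorm
    by (simp add: mat_app_minus_smult_one algebra_simps sum_subtractf sum_distrib_left)
  have "mat_app B x i = 0" if "i < n" for i
    by (rule sesq_nonpos_imp_kernel[OF B _ _ that]) (use max x in \<open>simp_all add: sesq_B m_def\<close>)
  then have "mat_app A x i = of_real m * x i" if "i < n" for i
    using that Ac by (simp add: B_def mat_app_minus_smult_one)
  moreover have "\<exists>i<n. x i \<noteq> 0"
    using x sqnorm_eq_0_iff[of n x] by auto
  ultimately show ?thesis
    using that[OF x _ max] Ac by (simp add: eigenvector_vec_iff m_def)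
qed

lemma proots_linear_factors: "proots (\<Prod>a\<leftarrow>as. [:- a, 1:]) = mset as"
proof (induction as)
  case (Cons a as)
  have "(\<Prod>a\<leftarrow>as. [:- a, 1:]) \<noteq> 0"
    by (auto simp: prod_list_zero_iff)
  then have "proots ([:- a, 1:] * (\<Prod>a\<leftarrow>as. [:- a, 1:])) = proots [:- a, 1:] + mset as"
    using Cons.IH by (subst proots_mult) simp_all
  then show ?case
    by simp
qed simp

lemma eigs_linear_factors:
  assumes "char_poly A = (\<Prod>a\<leftarrow>as. [:- a, 1:])"
  shows "eigs A = sort (map Re as)"
  unfolding eigs_def assms proots_linear_factors by (simp flip: mset_map)

lemma sorted_eigs: "sorted (eigs A)"
  by (simp add: eigs_def)

lemma length_eigs: "A \<in> carrier_mat n n \<Longrightarrow> length (eigs A) = n"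
  using char_poly_factorized[of A n] eigs_linear_factors[of A] by fastforce

lemma set_eigs:
  assumes "A \<in> carrier_mat n n"
  shows "set (eigs A) = Re ` {c. eigenvalue A c}"
proof -
  have "char_poly A \<noteq> 0"
    using degree_monic_char_poly[OF assms] by auto
  then show ?thesis
    by (simp add: eigs_def eigenvalue_root_char_poly[OF assms])
qed

lemma eigenvector_in_eigs:
  assumes "A \<in> carrier_mat n n" "eigenvector A v (of_real m)"
  shows "m \<in> set (eigs A)"
  using assms unfolding set_eigs[OF assms(1)] eigenvalue_def
  by (auto intro!: image_eqI[of _ Re "of_real m"])

lemma eigs_bounds:
  assumes "A \<in> carrier_mat n n" "l \<in> set (eigs A)"
  shows "eigs A ! 0 \<le> l" "l \<le> eigs A ! (n - 1)"
proof -
  obtain k where k: "k < n" "eigs A ! k = l"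
    using assms length_eigs[OF assms(1)] by (auto simp: in_set_conv_nth)
  then show "eigs A ! 0 \<le> l" "l \<le> eigs A ! (n - 1)"
    using sorted_nth_mono[OF sorted_eigs, of _ _ A] length_eigs[OF assms(1)] by force+
qed

lemma eigs_le_of_sesq_le:
  assumes A: "A \<in> carrier_mat n n" and bound: "\<And>y. Re (sesq A y y) \<le> m * sqnorm n y"
    and l: "l \<in> set (eigs A)"
  shows "l \<le> m"
proof -
  obtain c where c: "eigenvalue A c" and l: "l = Re c"
    using l set_eigs[OF A] by auto
  then obtain v where v: "eigenvector A v c"
    unfolding eigenvalue_def by blast
  then have "v \<in> carrier_vec n"
    using A by (simp add: eigenvector_def)
  then have "eigenvector A (vec n (\<lambda>i. v $ i)) c"
    using v by (metis eq_vecI carrier_vecD dim_vec index_vec)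
  then have ev: "\<exists>i<n. v $ i \<noteq> 0" "\<And>i. i < n \<Longrightarrow> mat_app A (\<lambda>i. v $ i) i = c * v $ i"
    using A by (auto simp: eigenvector_vec_iff)
  have "sesq A (\<lambda>i. v $ i) (\<lambda>i. v $ i) = c * of_real (sqnorm n (\<lambda>i. v $ i))"
    using A ev(2) sesq_eigenvector[of A "\<lambda>i. v $ i" c "\<lambda>i. v $ i"] by (simp add: of_real_sqnorm)
  then have "Re c * sqnorm n (\<lambda>i. v $ i) \<le> m * sqnorm n (\<lambda>i. v $ i)"
    using bound[of "\<lambda>i. v $ i"] by simp
  moreover have "0 < sqnorm n (\<lambda>i. v $ i)"
    using ev(1) sqnorm_nonneg[of n "\<lambda>i. v $ i"] sqnorm_eq_0_iff[of n "\<lambda>i. v $ i"] by auto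
  ultimately show ?thesis
    using l by simp
qed

lemma hermitian_top_eigenvector:
  assumes A: "hermitian n A" and n: "0 < n"
  obtains x where "sqnorm n x = 1" "Re (sesq A x x) = eigs A ! (n - 1)"
    "\<And>y. Re (sesq A y y) \<le> eigs A ! (n - 1) * sqnorm n y"
proof -
  have Ac: "A \<in> carrier_mat n n"
    using A by (rule hermitian_carrier)
  obtain x where x: "sqnorm n x = 1" and ev: "eigenvector A (vec n x) (of_real (Re (sesq A x x)))"
    and max: "\<And>y. Re (sesq A y y) \<le> Re (sesq A x x) * sqnorm n y"
    using hermitian_max_eigenvector[OF A n] by blast
  have len: "length (eigs A) = n"
    using length_eigs[OF Ac] .
  have "Re (sesq A x x) \<le> eigs A ! (n - 1)"
    by (rule eigs_bounds(2)[OF Ac eigenvector_in_eigs[OF Ac ev]])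
  moreover have "eigs A ! (n - 1) \<le> Re (sesq A x x)"
    using eigs_le_of_sesq_le[OF Ac max] len n by simp
  ultimately show ?thesis
    using that[OF x] max by simp
qed

lemma sesq_le_max_eigs:
  assumes A: "hermitian n A"
  shows "Re (sesq A y y) \<le> eigs A ! (n - 1) * sqnorm n y"
proof (cases "n = 0")
  case True
  then show ?thesis
    using hermitian_carrier[OF A] by (simp add: sesq_def sqnorm_def)
next
  case False
  then have "0 < n"
    by simp
  then obtain x where "\<And>y. Re (sesq A y y) \<le> eigs A ! (n - 1) * sqnorm n y"
    using hermitian_top_eigenvector[OF A] by blast
  then show ?thesis .
qed

lemma min_eigs_le_sesq:
  assumes A: "hermitian n A"
  shows "eigs A ! 0 * sqnorm n y \<le> Re (sesq A y y)"
proof (cases "n = 0")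
  case True
  then show ?thesis
    using hermitian_carrier[OF A] by (simp add: sesq_def sqnorm_def)
next
  case False
  then have n: "0 < n"
    by simp
  have Ac: "A \<in> carrier_mat n n"
    using A by (rule hermitian_carrier)
  have nA: "hermitian n (- A)"
    using Ac hermitian_cnj[OF A] by (intro hermitianI) auto
  obtain x where ev: "eigenvector (- A) (vec n x) (of_real (Re (sesq (- A) x x)))"
    and max: "\<And>y. Re (sesq (- A) y y) \<le> Re (sesq (- A) x x) * sqnorm n y"
    using hermitian_max_eigenvector[OF nA n] by blast
  define m where "m = Re (sesq (- A) x x)"
  have "eigenvector A (vec n x) (of_real (- m))"
    using eigenvector_vec_uminus[OF Ac ev] by (simp add: m_def)
  then have "eigs A ! 0 \<le> - m"
    by (rule eigs_bounds(1)[OF Ac eigenvector_in_eigs[OF Ac]])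
  then have "eigs A ! 0 * sqnorm n y \<le> - m * sqnorm n y"
    using sqnorm_nonneg by (rule mult_right_mono)
  also have "\<dots> \<le> Re (sesq A y y)"
    using max[of y] Ac by (simp add: sesq_uminus m_def)
  finally show ?thesis .
qed

section \<open>Two-by-two Hermitian matrices\<close>

definition perp :: "(nat \<Rightarrow> complex) \<Rightarrow> nat \<Rightarrow> complex" where
  "perp x i = (if i = 0 then - cnj (x 1) else cnj (x 0))"

lemma sqnorm_perp: "sqnorm 2 (perp x) = sqnorm 2 x"
  unfolding sqnorm_def perp_def by (simp add: numeral_2_eq_2)

lemma sesq_add_sesq_perp:
  assumes "A \<in> carrier_mat 2 2"
  shows "sesq A x x + sesq A (perp x) (perp x) = (A $$ (0, 0) + A $$ (1, 1)) * sqnorm 2 x"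
  using assms unfolding sesq_def mat_app_def perp_def of_real_sqnorm
  by (simp add: numeral_2_eq_2 algebra_simps)

lemma char_poly_2:
  assumes A: "A \<in> carrier_mat 2 2"
  shows "char_poly A =
    [:A $$ (0, 0) * A $$ (1, 1) - A $$ (0, 1) * A $$ (1, 0), - (A $$ (0, 0) + A $$ (1, 1)), 1:]"
proof -
  have "char_poly A = (\<Sum>i<2. char_poly_matrix A $$ (i, 0) * cofactor (char_poly_matrix A) i 0)"
    unfolding char_poly_def using A by (intro laplace_expansion_column) auto
  also have "\<dots> =
      [:A $$ (0, 0) * A $$ (1, 1) - A $$ (0, 1) * A $$ (1, 0), - (A $$ (0, 0) + A $$ (1, 1)), 1:]"
    using A unfolding cofactor_def
    by (simp add: numeral_2_eq_2 det_single mat_delete_carrier char_poly_matrix_def mat_delete_def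
        algebra_simps)
  finally show ?thesis .
qed

lemma eigs_sum_2:
  assumes A: "A \<in> carrier_mat 2 2"
  shows "eigs A ! 0 + eigs A ! 1 = Re (A $$ (0, 0) + A $$ (1, 1))"
proof -
  obtain as where cp: "char_poly A = (\<Prod>a\<leftarrow>as. [:- a, 1:])" and "length as = 2"
    using char_poly_factorized[OF A] by blast
  then obtain a b where as: "as = [a, b]"
    by (auto simp: numeral_2_eq_2 length_Suc_conv)
  have "a + b = A $$ (0, 0) + A $$ (1, 1)"
    using arg_cong[OF cp, of "\<lambda>p. coeff p 1"] unfolding char_poly_2[OF A] as
    by (simp add: algebra_simps)
  then have "Re a + Re b = Re (A $$ (0, 0) + A $$ (1, 1))"
    by (metis plus_complex.sel(1))
  moreover have "eigs A = sort [Re a, Re b]"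
    using eigs_linear_factors[OF cp] as by simp
  ultimately show ?thesis
    by auto
qed

lemma hermitian_2_eigenbasis:
  assumes A: "hermitian 2 A"
  obtains x where "sqnorm 2 x = 1" "Re (sesq A x x) = eigs A ! 1"
    "Re (sesq A (perp x) (perp x)) = eigs A ! 0"
proof -
  have Ac: "A \<in> carrier_mat 2 2"
    using A by (rule hermitian_carrier)
  obtain x where x: "sqnorm 2 x = 1" and top: "Re (sesq A x x) = eigs A ! 1"
    using hermitian_top_eigenvector[OF A] by force
  have "Re (sesq A x x) + Re (sesq A (perp x) (perp x)) = Re (A $$ (0, 0) + A $$ (1, 1))"
    using arg_cong[OF sesq_add_sesq_perp[OF Ac, of x], of Re] x by simp
  then have "Re (sesq A (perp x) (perp x)) = eigs A ! 0"
    using top eigs_sum_2[OF Ac] by simp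
  then show ?thesis
    using that x top by blast
qed

section \<open>Two qubits\<close>

definition tensor_vec :: "(nat \<Rightarrow> complex) \<Rightarrow> (nat \<Rightarrow> complex) \<Rightarrow> nat \<Rightarrow> complex" where
  "tensor_vec u v k = u (k div 2) * v (k mod 2)"

lemma sqnorm_tensor_vec: "sqnorm 4 (tensor_vec u v) = sqnorm 2 u * sqnorm 2 v"
  unfolding sqnorm_def tensor_vec_def sum_lessThan_4 sum_lessThan_2
  by (simp add: norm_mult power_mult_distrib algebra_simps)

lemma sesq_tensor_vec_ptrace_B:
  assumes "\<rho> \<in> carrier_mat 4 4"
  shows "sesq \<rho> (tensor_vec u v) (tensor_vec u v)
      + sesq \<rho> (tensor_vec u (perp v)) (tensor_vec u (perp v))
    = sqnorm 2 v * sesq (ptrace_B \<rho>) u u"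
  using assms unfolding sesq_def mat_app_def tensor_vec_def perp_def of_real_sqnorm
  apply (simp add: ptrace_B_def sum_lessThan_2 sum_lessThan_4)
  apply (simp only: numeral_3_eq_3 numeral_2_eq_2 One_nat_def)
  by (simp add: algebra_simps)

lemma sesq_tensor_vec_ptrace_A:
  assumes "\<rho> \<in> carrier_mat 4 4"
  shows "sesq \<rho> (tensor_vec u v) (tensor_vec u v)
      + sesq \<rho> (tensor_vec (perp u) v) (tensor_vec (perp u) v)
    = sqnorm 2 u * sesq (ptrace_A \<rho>) v v"
  using assms unfolding sesq_def mat_app_def tensor_vec_def perp_def of_real_sqnorm
  apply (simp add: ptrace_A_def sum_lessThan_2 sum_lessThan_4)
  apply (simp only: numeral_3_eq_3 numeral_2_eq_2 One_nat_def)
  by (simp add: algebra_simps)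

lemma hermitian_ptrace_B: "hermitian 4 \<rho> \<Longrightarrow> hermitian 2 (ptrace_B \<rho>)"
  using hermitian_cnj[of 4 \<rho>] by (intro hermitianI) (auto simp: ptrace_B_def sum_lessThan_2)

lemma hermitian_ptrace_A: "hermitian 4 \<rho> \<Longrightarrow> hermitian 2 (ptrace_A \<rho>)"
  using hermitian_cnj[of 4 \<rho>] by (intro hermitianI) (auto simp: ptrace_A_def sum_lessThan_2)

lemma ptrace_spread_le:
  assumes \<rho>: "hermitian 4 \<rho>"
  shows "(eigs (ptrace_B \<rho>) ! 1 - eigs (ptrace_B \<rho>) ! 0)
      + (eigs (ptrace_A \<rho>) ! 1 - eigs (ptrace_A \<rho>) ! 0)
    \<le> 2 * (eigs \<rho> ! 3 - eigs \<rho> ! 0)"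
proof -
  have \<rho>c: "\<rho> \<in> carrier_mat 4 4"
    using \<rho> by (rule hermitian_carrier)
  obtain u where u: "sqnorm 2 u = 1" and
    uB: "Re (sesq (ptrace_B \<rho>) u u) = eigs (ptrace_B \<rho>) ! 1"
        "Re (sesq (ptrace_B \<rho>) (perp u) (perp u)) = eigs (ptrace_B \<rho>) ! 0"
    using hermitian_2_eigenbasis[OF hermitian_ptrace_B[OF \<rho>]] by blast
  obtain v where v: "sqnorm 2 v = 1" and
    vA: "Re (sesq (ptrace_A \<rho>) v v) = eigs (ptrace_A \<rho>) ! 1"
        "Re (sesq (ptrace_A \<rho>) (perp v) (perp v)) = eigs (ptrace_A \<rho>) ! 0"
    using hermitian_2_eigenbasis[OF hermitian_ptrace_A[OF \<rho>]] by blast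
  define q where "q a b = Re (sesq \<rho> (tensor_vec a b) (tensor_vec a b))" for a b
  have "eigs (ptrace_B \<rho>) ! 1 = q u v + q u (perp v)"
    using arg_cong[OF sesq_tensor_vec_ptrace_B[OF \<rho>c, of u v], of Re] v uB by (simp add: q_def)
  moreover have "eigs (ptrace_B \<rho>) ! 0 = q (perp u) v + q (perp u) (perp v)"
    using arg_cong[OF sesq_tensor_vec_ptrace_B[OF \<rho>c, of "perp u" v], of Re] v uB by (simp add: q_def)
  moreover have "eigs (ptrace_A \<rho>) ! 1 = q u v + q (perp u) v"
    using arg_cong[OF sesq_tensor_vec_ptrace_A[OF \<rho>c, of u v], of Re] u vA by (simp add: q_def)
  moreover have "eigs (ptrace_A \<rho>) ! 0 = q u (perp v) + q (perp u) (perp v)"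
    using arg_cong[OF sesq_tensor_vec_ptrace_A[OF \<rho>c, of u "perp v"], of Re] u vA by (simp add: q_def)
  moreover have "q u v \<le> eigs \<rho> ! 3"
    using sesq_le_max_eigs[OF \<rho>, of "tensor_vec u v"] u v by (simp add: q_def sqnorm_tensor_vec)
  moreover have "eigs \<rho> ! 0 \<le> q (perp u) (perp v)"
    using min_eigs_le_sesq[OF \<rho>, of "tensor_vec (perp u) (perp v)"] u v
    by (simp add: q_def sqnorm_tensor_vec sqnorm_perp)
  ultimately show ?thesis
    by simp
qed

section \<open>The Hamiltonians\<close>

definition kron_sum :: "complex mat \<Rightarrow> complex mat \<Rightarrow> complex mat" where
  "kron_sum A B = tensor2 A I2 + tensor2 I2 B"

lemma tensor2_carrier [simp]: "tensor2 A B \<in> carrier_mat 4 4"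
  unfolding tensor2_def by simp

lemma kron_sum_carrier [simp]: "kron_sum A B \<in> carrier_mat 4 4"
  unfolding kron_sum_def by simp

lemma dim_kron_sum [simp]: "dim_row (kron_sum A B) = 4" "dim_col (kron_sum A B) = 4"
  by (simp_all add: kron_sum_def tensor2_def)

lemma tensor2_mult:
  assumes "A \<in> carrier_mat 2 2" "B \<in> carrier_mat 2 2" "C \<in> carrier_mat 2 2" "D \<in> carrier_mat 2 2"
  shows "tensor2 A B * tensor2 C D = tensor2 (A * C) (B * D)"
proof (rule eq_matI)
  fix i j
  assume "i < dim_row (tensor2 (A * C) (B * D))" "j < dim_col (tensor2 (A * C) (B * D))"
  then have "i < 4" "j < 4"
    by (simp_all add: tensor2_def)
  moreover have "i div 2 < 2" "i mod 2 < 2" "j div 2 < 2" "j mod 2 < 2"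
    using \<open>i < 4\<close> \<open>j < 4\<close> by auto
  ultimately show "(tensor2 A B * tensor2 C D) $$ (i, j) = tensor2 (A * C) (B * D) $$ (i, j)"
    using assms
    by (simp add: tensor2_def scalar_prod_def atLeast0LessThan sum_lessThan_2 sum_lessThan_4
        algebra_simps)
qed (simp_all add: tensor2_def)

lemma tensor2_one: "tensor2 (1\<^sub>m 2) (1\<^sub>m 2) = 1\<^sub>m 4"
proof (rule eq_matI)
  fix i j
  assume "i < dim_row (1\<^sub>m 4 :: complex mat)" "j < dim_col (1\<^sub>m 4 :: complex mat)"
  then have "i < 4" "j < 4"
    by simp_all
  moreover have "i = j \<longleftrightarrow> i div 2 = j div 2 \<and> i mod 2 = j mod 2"
    by (metis div_mult_mod_eq)
  ultimately show "tensor2 (1\<^sub>m 2) (1\<^sub>m 2) $$ (i, j) = (1\<^sub>m 4 :: complex mat) $$ (i, j)"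
    by (auto simp: tensor2_def)
qed (simp_all add: tensor2_def)

lemma similar_mat_wit_kron_sum:
  assumes "similar_mat_wit A A' P Q" "similar_mat_wit B B' R S"
    and "A \<in> carrier_mat 2 2" "B \<in> carrier_mat 2 2"
  shows "similar_mat_wit (kron_sum A B) (kron_sum A' B') (tensor2 P R) (tensor2 Q S)"
proof -
  note A = similar_mat_witD2[OF assms(3,1)] and B = similar_mat_witD2[OF assms(4,2)]
  let ?U = "tensor2 P R" and ?V = "tensor2 Q S" and ?X = "tensor2 A' I2" and ?Y = "tensor2 I2 B'"
  have "?U * (?X + ?Y) = ?U * ?X + ?U * ?Y"
    by (rule mult_add_distrib_mat[of _ 4 4 _ 4]) simp_all
  then have "?U * kron_sum A' B' * ?V = (?U * ?X + ?U * ?Y) * ?V"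
    by (simp add: kron_sum_def)
  also have "\<dots> = ?U * ?X * ?V + ?U * ?Y * ?V"
    by (rule add_mult_distrib_mat[of _ 4 4 _ _ 4]) (simp_all add: mult_carrier_mat[of _ 4 4])
  also have "\<dots> = kron_sum A B"
    using A B by (simp add: kron_sum_def tensor2_mult I2_def)
  finally have "kron_sum A B = ?U * kron_sum A' B' * ?V" ..
  then show ?thesis
    using A B
    by (intro similar_mat_witI[of _ _ 4]) (simp_all add: tensor2_mult tensor2_one mult_carrier_mat[of _ 4 4])
qed

lemma kron_sum_entry:
  assumes "i < 4" "j < 4"
  shows "kron_sum A B $$ (i, j) =
    A $$ (i div 2, j div 2) * I2 $$ (i mod 2, j mod 2) + I2 $$ (i div 2, j div 2) * B $$ (i mod 2, j mod 2)"
  using assms by (simp add: kron_sum_def tensor2_def)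

lemma smult_kron_sum:
  assumes "A \<in> carrier_mat 2 2" "B \<in> carrier_mat 2 2"
  shows "c \<cdot>\<^sub>m kron_sum A B = kron_sum (c \<cdot>\<^sub>m A) (c \<cdot>\<^sub>m B)"
proof (rule eq_matI)
  fix i j
  assume "i < dim_row (kron_sum (c \<cdot>\<^sub>m A) (c \<cdot>\<^sub>m B))" "j < dim_col (kron_sum (c \<cdot>\<^sub>m A) (c \<cdot>\<^sub>m B))"
  then have "i < 4" "j < 4"
    by (simp_all add: kron_sum_def tensor2_def)
  moreover have "i div 2 < 2" "i mod 2 < 2" "j div 2 < 2" "j mod 2 < 2"
    using \<open>i < 4\<close> \<open>j < 4\<close> by auto
  ultimately show "(c \<cdot>\<^sub>m kron_sum A B) $$ (i, j) = kron_sum (c \<cdot>\<^sub>m A) (c \<cdot>\<^sub>m B) $$ (i, j)"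
    using assms by (simp add: kron_sum_entry algebra_simps)
qed (simp_all add: kron_sum_def tensor2_def)

lemma kron_sum_add:
  assumes "A \<in> carrier_mat 2 2" "B \<in> carrier_mat 2 2"
  shows "kron_sum (A + B) (A + B) = tensor2 A I2 + tensor2 B I2 + tensor2 I2 A + tensor2 I2 B"
proof (rule eq_matI)
  fix i j
  assume "i < dim_row (tensor2 A I2 + tensor2 B I2 + tensor2 I2 A + tensor2 I2 B)"
    "j < dim_col (tensor2 A I2 + tensor2 B I2 + tensor2 I2 A + tensor2 I2 B)"
  then have "i < 4" "j < 4"
    by (simp_all add: tensor2_def)
  moreover have "i div 2 < 2" "i mod 2 < 2" "j div 2 < 2" "j mod 2 < 2"
    using \<open>i < 4\<close> \<open>j < 4\<close> by auto
  ultimately show "kron_sum (A + B) (A + B) $$ (i, j)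
      = (tensor2 A I2 + tensor2 B I2 + tensor2 I2 A + tensor2 I2 B) $$ (i, j)"
    using assms by (simp add: kron_sum_entry tensor2_def algebra_simps)
qed (simp_all add: kron_sum_def tensor2_def)

lemma kron_sum_mat_diag:
  "kron_sum (mat_diag 2 f) (mat_diag 2 g) = mat_diag 4 (\<lambda>k. f (k div 2) + g (k mod 2))"
proof (rule eq_matI)
  fix i j
  assume "i < dim_row (mat_diag 4 (\<lambda>k. f (k div 2) + g (k mod 2)))"
    "j < dim_col (mat_diag 4 (\<lambda>k. f (k div 2) + g (k mod 2)))"
  then have "i < 4" "j < 4"
    by (simp_all add: mat_diag_def)
  moreover have "i div 2 < 2" "i mod 2 < 2" "j div 2 < 2" "j mod 2 < 2"
    using \<open>i < 4\<close> \<open>j < 4\<close> by auto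
  moreover have "i = j \<longleftrightarrow> i div 2 = j div 2 \<and> i mod 2 = j mod 2"
    by (metis div_mult_mod_eq)
  ultimately show "kron_sum (mat_diag 2 f) (mat_diag 2 g) $$ (i, j)
      = mat_diag 4 (\<lambda>k. f (k div 2) + g (k mod 2)) $$ (i, j)"
    by (auto simp: kron_sum_entry mat_diag_def I2_def)
qed (simp_all add: kron_sum_def tensor2_def mat_diag_def)

lemma eigs_mat_diag: "eigs (mat_diag n f) = sort (map (\<lambda>i. Re (f i)) [0..<n])"
proof -
  have "diag_mat (mat_diag n f) = map f [0..<n]"
    unfolding diag_mat_def mat_diag_def by (intro map_cong) auto
  then have "char_poly (mat_diag n f) = (\<Prod>a\<leftarrow>map f [0..<n]. [:- a, 1:])"
    by (subst char_poly_upper_triangular[of _ n]) (auto simp: mat_diag_def upper_triangular_def)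
  then have "eigs (mat_diag n f) = sort (map Re (map f [0..<n]))"
    by (rule eigs_linear_factors)
  then show ?thesis
    by (simp add: comp_def)
qed

lemma eigs_similar: "similar_mat A B \<Longrightarrow> eigs A = eigs B"
  unfolding eigs_def by (simp add: char_poly_similar)

lemma capacity_spectrum_2:
  assumes "dim_row H = 2" "eigs H = [- a, a]"
  shows "capacity R H = 2 * a * (eigs R ! 1 - eigs R ! 0)"
  unfolding capacity_def Let_def assms by (simp add: numeral_2_eq_2 algebra_simps)

lemma capacity_spectrum_4:
  assumes "dim_row H = 4" "eigs H = [- (2 * a), 0, 0, 2 * a]"
  shows "capacity R H = 4 * a * (eigs R ! 3 - eigs R ! 0)"
  unfolding capacity_def Let_def assms by (simp add: eval_nat_numeral algebra_simps)

abbreviation pm_diag :: "real \<Rightarrow> complex mat" where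
  "pm_diag c \<equiv> mat_diag 2 (\<lambda>i. if i = 0 then of_real c else - of_real c)"

lemma capacity_kron_sum_le:
  assumes \<rho>: "hermitian 4 \<rho>" and Tc: "T \<in> carrier_mat 2 2" and T: "similar_mat T (pm_diag c)"
    and c: "0 \<le> c"
  shows "capacity (ptrace_B \<rho>) T + capacity (ptrace_A \<rho>) T \<le> capacity \<rho> (kron_sum T T)"
proof -
  obtain P Q where PQ: "similar_mat_wit T (pm_diag c) P Q"
    using T unfolding similar_mat_def by blast
  have "eigs T = [- c, c]"
    using eigs_similar[OF T] c by (simp add: eigs_mat_diag upt_conv_Cons)
  then have capT: "capacity R T = 2 * c * (eigs R ! 1 - eigs R ! 0)" for R
    using Tc by (intro capacity_spectrum_2) auto
  have "similar_mat (kron_sum T T) (kron_sum (pm_diag c) (pm_diag c))"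
    using similar_mat_wit_kron_sum[OF PQ PQ Tc Tc] unfolding similar_mat_def by blast
  then have "eigs (kron_sum T T) = [- (2 * c), 0, 0, 2 * c]"
    using c by (simp add: eigs_similar kron_sum_mat_diag eigs_mat_diag upt_conv_Cons)
  then have "capacity \<rho> (kron_sum T T) = 4 * c * (eigs \<rho> ! 3 - eigs \<rho> ! 0)"
    by (intro capacity_spectrum_4) auto
  then show ?thesis
    unfolding capT using mult_left_mono[OF ptrace_spread_le[OF \<rho>], of "2 * c"] c
    by (simp add: algebra_simps)
qed

lemma smult_pm_diag: "of_real a \<cdot>\<^sub>m pm_diag c = pm_diag (a * c)"
  by (rule eq_matI) (auto simp: mat_diag_def)

lemma mat_of_rows_list_2:
  "mat_of_rows_list 2 [[a, b], [c, d]] = mat 2 2 (\<lambda>(i, j). [[a, b], [c, d]] ! i ! j)"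
  by (simp add: mat_of_rows_list_def numeral_2_eq_2)

lemma eq_mat_2I:
  assumes "A \<in> carrier_mat 2 2" "B \<in> carrier_mat 2 2"
    "A $$ (0, 0) = B $$ (0, 0)" "A $$ (0, 1) = B $$ (0, 1)"
    "A $$ (1, 0) = B $$ (1, 0)" "A $$ (1, 1) = B $$ (1, 1)"
  shows "A = B"
  by (rule eq_matI) (use assms in \<open>auto simp: less_2_cases_iff\<close>)

lemma sigma_carrier [simp]:
  "sigma_x \<in> carrier_mat 2 2" "sigma_y \<in> carrier_mat 2 2" "sigma_z \<in> carrier_mat 2 2"
  by (simp_all add: sigma_x_def sigma_y_def sigma_z_def mat_of_rows_list_2)

lemma sigma_x_plus_sigma_y_similar: "similar_mat (sigma_x + sigma_y) (pm_diag (sqrt 2))"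
proof -
  define s where "s = complex_of_real (sqrt 2)"
  \<comment> \<open>The columns of \<open>P\<close> are eigenvectors of \<open>\<sigma>\<^sub>x + \<sigma>\<^sub>y\<close> for \<open>\<plusminus>sqrt 2\<close>;
    \<open>Q = P\<inverse>\<close>.\<close>
  define P where "P = mat_of_rows_list 2 [[(1 - \<i>) / 2, (1 - \<i>) / 2], [s / 2, - s / 2]]"
  define Q where "Q = mat_of_rows_list 2 [[(1 + \<i>) / 2, s / 2], [(1 + \<i>) / 2, - s / 2]]"
  have PQ: "P \<in> carrier_mat 2 2" "Q \<in> carrier_mat 2 2"
    by (simp_all add: P_def Q_def mat_of_rows_list_2)
  have prods: "P * Q \<in> carrier_mat 2 2" "Q * P \<in> carrier_mat 2 2"
    "P * pm_diag (sqrt 2) * Q \<in> carrier_mat 2 2"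
    using PQ by (auto simp: mat_diag_def)
  note entries = P_def Q_def sigma_x_def sigma_y_def mat_of_rows_list_2 mat_diag_def
    scalar_prod_def atLeast0LessThan sum_lessThan_2 complex_eq_iff s_def
  have "P * Q = 1\<^sub>m 2"
    by (rule eq_mat_2I[OF prods(1)]) (simp_all add: entries)
  moreover have "Q * P = 1\<^sub>m 2"
    by (rule eq_mat_2I[OF prods(2)]) (simp_all add: entries)
  moreover have "sigma_x + sigma_y = P * pm_diag (sqrt 2) * Q"
    by (rule eq_mat_2I[OF _ prods(3)]) (simp_all add: entries)
  ultimately show ?thesis
    using PQ by (intro similar_matI[of _ _ P Q 2]) (auto simp: mat_diag_def)
qed

lemma transverse_field:
  "similar_mat (of_real E \<cdot>\<^sub>m (sigma_x + sigma_y)) (pm_diag (E * sqrt 2))"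
  "of_real E \<cdot>\<^sub>m (tensor2 sigma_x I2 + tensor2 sigma_y I2 + tensor2 I2 sigma_x + tensor2 I2 sigma_y)
     = kron_sum (of_real E \<cdot>\<^sub>m (sigma_x + sigma_y)) (of_real E \<cdot>\<^sub>m (sigma_x + sigma_y))"
proof -
  show "similar_mat (of_real E \<cdot>\<^sub>m (sigma_x + sigma_y)) (pm_diag (E * sqrt 2))"
    using similar_mat_smult[OF sigma_x_plus_sigma_y_similar, of "of_real E"]
    by (simp only: smult_pm_diag)
  have "of_real E \<cdot>\<^sub>m (tensor2 sigma_x I2 + tensor2 sigma_y I2 + tensor2 I2 sigma_x + tensor2 I2 sigma_y)
      = of_real E \<cdot>\<^sub>m kron_sum (sigma_x + sigma_y) (sigma_x + sigma_y)"
    by (simp only: kron_sum_add[OF sigma_carrier(1,2)])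
  also have "\<dots> = kron_sum (of_real E \<cdot>\<^sub>m (sigma_x + sigma_y)) (of_real E \<cdot>\<^sub>m (sigma_x + sigma_y))"
    by (rule smult_kron_sum) simp_all
  finally show "of_real E \<cdot>\<^sub>m (tensor2 sigma_x I2 + tensor2 sigma_y I2 + tensor2 I2 sigma_x + tensor2 I2 sigma_y)
     = kron_sum (of_real E \<cdot>\<^sub>m (sigma_x + sigma_y)) (of_real E \<cdot>\<^sub>m (sigma_x + sigma_y))" .
qed

lemma longitudinal_field:
  "similar_mat (of_real E \<cdot>\<^sub>m sigma_z) (pm_diag E)"
  "of_real E \<cdot>\<^sub>m (tensor2 sigma_z I2 + tensor2 I2 sigma_z)
     = kron_sum (of_real E \<cdot>\<^sub>m sigma_z) (of_real E \<cdot>\<^sub>m sigma_z)"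
proof -
  have "of_real E \<cdot>\<^sub>m sigma_z = pm_diag E"
    by (rule eq_mat_2I) (simp_all add: sigma_z_def mat_of_rows_list_2 mat_diag_def)
  then show "similar_mat (of_real E \<cdot>\<^sub>m sigma_z) (pm_diag E)"
    using similar_mat_refl[of "of_real E \<cdot>\<^sub>m sigma_z" 2] by simp
  show "of_real E \<cdot>\<^sub>m (tensor2 sigma_z I2 + tensor2 I2 sigma_z)
     = kron_sum (of_real E \<cdot>\<^sub>m sigma_z) (of_real E \<cdot>\<^sub>m sigma_z)"
    unfolding kron_sum_def[symmetric] by (rule smult_kron_sum) simp_all
qed

theorem theorem1:
  fixes E :: real and H0 HA HB Hint \<rho> :: "complex mat"
  assumes "E > 0"
    and "(H0 = complex_of_real E \<cdot>\<^sub>m (tensor2 sigma_x I2 + tensor2 sigma_y I2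
                 + tensor2 I2 sigma_x + tensor2 I2 sigma_y)
          \<and> HA = complex_of_real E \<cdot>\<^sub>m (sigma_x + sigma_y)
          \<and> HB = complex_of_real E \<cdot>\<^sub>m (sigma_x + sigma_y))
       \<or> (H0 = complex_of_real E \<cdot>\<^sub>m (tensor2 sigma_z I2 + tensor2 I2 sigma_z)
          \<and> HA = complex_of_real E \<cdot>\<^sub>m sigma_z
          \<and> HB = complex_of_real E \<cdot>\<^sub>m sigma_z)"
    and "hermitian 4 Hint"
    and "density 4 \<rho>"
    and "capacity \<rho> (H0 + Hint) \<ge> capacity \<rho> H0"
  shows "capacity (ptrace_B \<rho>) HA + capacity (ptrace_A \<rho>) HB \<le> capacity \<rho> (H0 + Hint)"
proof -
  have \<rho>: "hermitian 4 \<rho>"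
    using assms(4) by (simp add: density_def psd_def)
  have "capacity (ptrace_B \<rho>) HA + capacity (ptrace_A \<rho>) HB \<le> capacity \<rho> H0"
    using assms(2) \<open>E > 0\<close> transverse_field[of E] longitudinal_field[of E]
      capacity_kron_sum_le[OF \<rho> _ transverse_field(1)]
      capacity_kron_sum_le[OF \<rho> _ longitudinal_field(1)]
    by auto
  then show ?thesis
    using assms(5) by linarith
qed

end
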